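(* Let $S$ be a finite multiset of $m$ labeled points $(x,y)\in[0,1]\times\{-1,+1\}$ (a pool whose labels are hidden until queried), let $k\ge 0$ be an integer, and assume $\mathrm{err}(S,\mathcal{H}_{\dashv})\le k/m$. Consider the following procedure: query the labels of the points of $S$ in decreasing order of $x$ (from highest to lowest), stopping as soon as $k+1$ negative labels have been observed (or all points have been queried); then output a hypothesis $\hat h\in\mathcal{H}_{\dashv}$ that minimizes the error on the set of queried (now labeled) points. Then $\mathrm{err}(S,\hat h)=\mathrm{err}(S,\mathcal{H}_{\dashv})$, and the procedure queries at most $k+1$ points whose label is negative (auditing complexity $k+1$).
   Context: For $a\in[0,1]$, the threshold hypothesis $h_a:[0,1]\to\{-1,+1\}$ is $h_a(x)=+1$ if $x\ge a$ and $h_a(x)=-1$ otherwise; $\mathcal{H}_{\dashv}=\{h_a : a\in[0,1]\}$. For a multiset $S$ of labeled points, $\mathrm{err}(S,h)=\frac{1}{|S|}\sum_{(x,y)\in S}\mathbb{I}[h(x)\ne y]$ and $\mathrm{err}(S,\mathcal{H})=\min_{h\in\mathcal{H}}\mathrm{err}(S,h)$. The auditing complexity of a procedure is the number of queries it makes on points whose label is negative. *)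

theory Defs
  imports Complex_Main "HOL-Library.Multiset"
begin

definition thr :: "real \<Rightarrow> real \<Rightarrow> int" where
  "thr a x = (if x \<ge> a then 1 else -1)"

definition err :: "(real \<times> int) multiset \<Rightarrow> (real \<Rightarrow> int) \<Rightarrow> real" where
  "err S h = (\<Sum>p\<in>#S. (if h (fst p) \<noteq> snd p then 1 else 0)) / real (size S)"

text \<open>Error of the threshold class: the minimum (infimum; attained, finitely many values).\<close>
definition errH :: "(real \<times> int) multiset \<Rightarrow> real" where
  "errH S = Inf ((\<lambda>a. err S (thr a)) ` {0..1})"

fun queried :: "nat \<Rightarrow> (real \<times> int) list \<Rightarrow> (real \<times> int) list" where
  "queried k [] = []"
| "queried k (p # r) = p # (if snd p = -1 then (if k = 0 then [] else queried (k - 1) r)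
                              else queried k r)"

end

theory Submission
  imports Defs
begin

text \<open>Let Q be the queried prefix and t the smallest x-value in it. If the query stopped early,
  Q contains k + 1 negatives, all at or above t, and every point not queried lies at or below t.
  A threshold at or below t therefore misclassifies all k + 1 negatives of Q, while the bound on
  the optimal error yields a threshold with at most k mistakes on S; so both that threshold and
  the empirical minimiser on Q lie above t. Thresholds above t all label the unqueried points
  negative and hence make the same number of mistakes on them, so minimising the mistakes on Q
  among them minimises the mistakes on S.\<close>

definition mistakes :: "real \<Rightarrow> (real \<times> int) list \<Rightarrow> nat" where
  "mistakes a xs = length (filter (\<lambda>p. thr a (fst p) \<noteq> snd p) xs)"

lemma mistakes_append: "mistakes a (xs @ ys) = mistakes a xs + mistakes a ys"
  unfolding mistakes_def by simp

lemma err_mset_thr: "err (mset xs) (thr a) = real (mistakes a xs) / real (length xs)"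
proof -
  have "(\<Sum>p\<in>#mset xs. (if P p then 1 else 0::real)) = real (length (filter P xs))" for P
    by (induction xs) auto
  then show ?thesis
    unfolding err_def mistakes_def by simp
qed

lemma err_mset_thr_le_iff:
  assumes "xs \<noteq> []"
  shows "err (mset xs) (thr a) \<le> err (mset xs) (thr b) \<longleftrightarrow> mistakes a xs \<le> mistakes b xs"
  using assms by (simp add: err_mset_thr divide_le_cancel)

lemma mistakes_ge_negatives:
  assumes "\<forall>p\<in>set xs. b \<le> fst p"
  shows "length (filter (\<lambda>p. snd p = -1) xs) \<le> mistakes b xs"
  using assms unfolding mistakes_def by (induction xs) (auto simp: thr_def)

lemma mistakes_below_threshold:
  assumes "\<forall>p\<in>set xs. fst p < b"
  shows "mistakes b xs = length (filter (\<lambda>p. snd p \<noteq> -1) xs)"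
  using assms unfolding mistakes_def by (induction xs) (auto simp: thr_def)

lemma exists_threshold_with_few_mistakes:
  assumes "xs \<noteq> []" and "errH (mset xs) \<le> real k / real (length xs)"
  obtains c where "c \<in> {0..1}" and "mistakes c xs \<le> k"
proof (rule ccontr)
  assume "\<not> thesis"
  with that have many: "\<forall>b\<in>{0..1}. k + 1 \<le> mistakes b xs"
    by force
  have "real (k + 1) / real (length xs) \<le> errH (mset xs)"
    unfolding errH_def
  proof (rule cInf_greatest)
    fix e assume "e \<in> (\<lambda>a. err (mset xs) (thr a)) ` {0..1}"
    then obtain b where "b \<in> {0..1}" and "e = err (mset xs) (thr b)" by auto
    then show "real (k + 1) / real (length xs) \<le> e"
      using many[rule_format, OF \<open>b \<in> {0..1}\<close>] by (simp add: err_mset_thr divide_right_mono)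
  qed auto
  with assms(2) have "real (k + 1) / real (length xs) \<le> real k / real (length xs)"
    by linarith
  with assms(1) show False by (simp add: divide_le_cancel)
qed

lemma queried_negatives_le: "length (filter (\<lambda>p. snd p = -1) (queried k q)) \<le> k + 1"
  by (induction k q rule: queried.induct) auto

lemma queried_append_drop: "queried k q @ drop (length (queried k q)) q = q"
  by (induction k q rule: queried.induct) auto

lemma queried_stopped_early:
  "length (queried k q) < length q \<Longrightarrow> length (filter (\<lambda>p. snd p = -1) (queried k q)) = k + 1"
  by (induction k q rule: queried.induct) (auto split: if_splits)

lemma sorted_desc_split_at_last:
  fixes Q R :: "('a::preorder \<times> 'b) list"
  assumes "sorted_wrt (\<lambda>p p'. fst p \<ge> fst p') (Q @ R)" and "Q \<noteq> []"
  shows "\<forall>p\<in>set Q. fst (last Q) \<le> fst p" and "\<forall>p\<in>set R. fst p \<le> fst (last Q)"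
proof -
  obtain Q' x where Q: "Q = Q' @ [x]"
    using assms(2) by (cases Q rule: rev_cases) auto
  from assms(1) show "\<forall>p\<in>set Q. fst (last Q) \<le> fst p" and "\<forall>p\<in>set R. fst p \<le> fst (last Q)"
    unfolding Q by (auto simp: sorted_wrt_append)
qed

lemma prefix_minimiser_minimises_mistakes:
  assumes sorted: "sorted_wrt (\<lambda>p p'. fst p \<ge> fst p') (Q @ R)"
    and negatives: "k + 1 \<le> length (filter (\<lambda>p. snd p = -1) Q)"
    and good: "c \<in> B" "mistakes c (Q @ R) \<le> k"
    and a_min: "\<forall>b\<in>B. mistakes a Q \<le> mistakes b Q"
    and "b \<in> B"
  shows "mistakes a (Q @ R) \<le> mistakes b (Q @ R)"
proof -
  have "Q \<noteq> []" using negatives by auto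
  define t where "t = fst (last Q)"
  have above: "\<forall>p\<in>set Q. t \<le> fst p" and below: "\<forall>p\<in>set R. fst p \<le> t"
    using sorted_desc_split_at_last[OF sorted \<open>Q \<noteq> []\<close>] unfolding t_def by auto
  have low_bad: "k + 1 \<le> mistakes d Q" if "d \<le> t" for d
    using negatives mistakes_ge_negatives[of Q d] above that by force
  have same_on_R: "mistakes d R = mistakes d' R" if "t < d" "t < d'" for d d'
  proof -
    have "\<forall>p\<in>set R. fst p < d" "\<forall>p\<in>set R. fst p < d'"
      using below that by force+
    then show ?thesis by (simp add: mistakes_below_threshold)
  qed
  have "t < c"
    using low_bad[of c] good by (force simp: mistakes_append)
  have "t < a"
    using low_bad[of a] a_min good \<open>t < c\<close> by (force simp: mistakes_append)
  have a_le_c: "mistakes a (Q @ R) \<le> mistakes c (Q @ R)"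
    using a_min good same_on_R[OF \<open>t < a\<close> \<open>t < c\<close>] by (simp add: mistakes_append)
  show ?thesis
  proof (cases "t < b")
    case True
    then show ?thesis
      using a_min \<open>b \<in> B\<close> same_on_R[OF \<open>t < a\<close> True] by (simp add: mistakes_append)
  next
    case False
    then show ?thesis
      using low_bad[of b] a_le_c good by (simp add: mistakes_append)
  qed
qed

theorem lemma2:
  fixes S :: "(real \<times> int) multiset" and k :: nat
    and q :: "(real \<times> int) list" and a :: real
  assumes pts: "\<forall>p\<in>#S. fst p \<in> {0..1} \<and> snd p \<in> {-1, 1}"
    and err_bound: "errH S \<le> real k / real (size S)"
    and q_perm: "mset q = S"
    and q_order: "sorted_wrt (\<lambda>p p'. fst p \<ge> fst p') q"
    and a_in: "a \<in> {0..1}"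
    and a_min: "\<forall>b\<in>{0..1}. err (mset (queried k q)) (thr a) \<le> err (mset (queried k q)) (thr b)"
  shows "err S (thr a) = errH S
         \<and> length (filter (\<lambda>p. snd p = -1) (queried k q)) \<le> k + 1"
proof -
  define Q R where "Q = queried k q" and "R = drop (length Q) q"
  have q_split: "q = Q @ R"
    unfolding Q_def R_def by (simp add: queried_append_drop)
  have "err S (thr a) \<le> err S (thr b)" if "b \<in> {0..1}" for b
  proof (cases "R = []")
    case True
    then show ?thesis using a_min that q_perm q_split unfolding Q_def by simp
  next
    case False
    then have "k + 1 \<le> length (filter (\<lambda>p. snd p = -1) Q)" and "Q \<noteq> []" "q \<noteq> []"
      using queried_stopped_early[of k q] q_split unfolding Q_def R_def by auto
    moreover obtain c where "c \<in> {0..1}" "mistakes c q \<le> k"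
      using exists_threshold_with_few_mistakes \<open>q \<noteq> []\<close> err_bound q_perm by force
    moreover have "\<forall>b\<in>{0..1}. mistakes a Q \<le> mistakes b Q"
      using a_min \<open>Q \<noteq> []\<close> err_mset_thr_le_iff unfolding Q_def by blast
    ultimately have "mistakes a q \<le> mistakes b q"
      using prefix_minimiser_minimises_mistakes[of Q R k c "{0..1}" a b] q_order q_split that
      by simp
    with \<open>q \<noteq> []\<close> q_perm show ?thesis
      using err_mset_thr_le_iff by blast
  qed
  then have "errH S = err S (thr a)"
    unfolding errH_def by (intro cInf_eq_minimum) (use a_in in auto)
  then show ?thesis using queried_negatives_le[of k q] by simp
qed

end
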